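(* Let $C=\mathtt{while}(\varphi)\{C_{\mathrm{body}}\}[I]$ be a (possibly nested) $\mathsf{pGCL}$ loop and let $f\in\mathbb{E}$. If $\mathrm{vc}^{\mathsf{dPASTSUBINV},\mathrm{awp}}[\![C]\!](f)$ holds, then $\mathrm{awp}[\![C]\!](f)\ge I$.
   Context: States: fix a countably infinite set of program variables with values in $\mathbb{Q}_{\ge 0}$; a state is a map $\sigma$ from variables to $\mathbb{Q}_{\ge0}$ which is $0$ for all but finitely many variables; $\mathsf{States}$ is the set of states. A predicate is a map $\varphi:\mathsf{States}\to\{\mathsf{true},\mathsf{false}\}$. Expectations: $\mathbb{E}$ is the set of maps $\mathsf{States}\to[0,\infty]$, ordered pointwise ($\le,\ge$); $+,\cdot$ pointwise with $0\cdot\infty=0$; $\sqcap,\sqcup$ pointwise min/max; $[\varphi]$ Iverson bracket; $(\varphi\to g)(\sigma)=g(\sigma)$ if $\sigma\models\varphi$, else $\infty$; $f[x/E](\sigma)=f(\sigma[x\mapsto E(\sigma)])$. Programs of $\mathsf{pGCL}$: $C ::= \mathtt{skip} \mid x:=E \mid C;C \mid \mathtt{if}\ \varphi_1\to C\ \square\ \varphi_2\to C \mid \{C\}[p]\{C\} \mid \mathtt{while}(\varphi)\{C\}[I]$, where $E:\mathsf{States}\to\mathbb{Q}_{\ge0}$, $p:\mathsf{States}\to[0,1]$, in every guarded choice $\varphi_1\vee\varphi_2$ is valid (when both hold the choice is nondeterministic), and every loop carries an invariant annotation $I\in\mathbb{E}$. Weakest preexpectations for $\mathcal{T}\in\{\mathrm{dwp},\mathrm{awp}\}$: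 $\mathcal{T}[\![\mathtt{skip}]\!](f)=f$; $\mathcal{T}[\![x:=E]\!](f)=f[x/E]$; $\mathcal{T}[\![C_1;C_2]\!](f)=\mathcal{T}[\![C_1]\!](\mathcal{T}[\![C_2]\!](f))$; $\mathrm{dwp}$ of a guarded choice: $(\varphi_1\to\mathrm{dwp}[\![C_1]\!](f))\sqcap(\varphi_2\to\mathrm{dwp}[\![C_2]\!](f))$; $\mathrm{awp}$ of a guarded choice: $[\varphi_1]\cdot\mathrm{awp}[\![C_1]\!](f)\sqcup[\varphi_2]\cdot\mathrm{awp}[\![C_2]\!](f)$; $\mathcal{T}[\![\{C_1\}[p]\{C_2\}]\!](f)=p\cdot\mathcal{T}[\![C_1]\!](f)+(1-p)\cdot\mathcal{T}[\![C_2]\!](f)$; loops: least fixpoint of $g\mapsto[\neg\varphi]\cdot f+[\varphi]\cdot\mathcal{T}[\![C']\!](g)$. $\mathrm{awp}^*$ follows the $\mathrm{awp}$ rules except $\mathrm{awp}^*[\![\mathtt{while}(\varphi)\{C'\}[I]]\!](f)=I$. A loop is dPAST (positively demonically almost-surely terminating) if its expected runtime (in the sense of the expected-runtime calculus of Kaminski et al., resolving nondeterminism in the worst case) is finite for all initial states. A loop $\mathtt{while}(\varphi)\{C_{\mathrm{body}}\}[I]$ is suitable for optional stopping w.r.t. $f$ if (i) $I=[\varphi]\cdot I'+[\neg\varphi]\cdot f$ for some $I'\in\mathbb{E}$, (ii) $f$, $I$ and $[\varphi]\cdot\mathrm{awp}[\![C_{\mathrm{body}}]\!](I)+[\neg\varphi]\cdot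 f$ are pointwise $<\infty$, and (iii) there is $b\in\mathbb{R}_{\ge0}$ with $([\varphi]\cdot\mathrm{awp}[\![C_{\mathrm{body}}]\!](\lambda\tau.|I(\tau)-I(\sigma)|))(\sigma)\le b$ for all $\sigma$. The provider $\mathsf{dPASTSUBINV}$ assigns to a loop $L=\mathtt{while}(\varphi)\{C_{\mathrm{body}}\}[I]$ and $g\in\mathbb{E}$ the value $\mathsf{true}$ iff $[\varphi]\cdot\mathrm{awp}^*[\![C_{\mathrm{body}}]\!](I)+[\neg\varphi]\cdot g\ge I$, $L$ is dPAST, and $L$ is suitable for optional stopping w.r.t. $g$. For a provider $\mathfrak{C}$ (a map from annotated loops and expectations to truth values), $\mathrm{vc}^{\mathfrak{C},\mathrm{awp}}[\![C]\!](f)$ is defined inductively: $\mathsf{true}$ for $\mathtt{skip}$ and assignments; $\mathrm{vc}[\![C_1]\!](\mathrm{awp}^*[\![C_2]\!](f))\wedge\mathrm{vc}[\![C_2]\!](f)$ for $C_1;C_2$; $\mathrm{vc}[\![C_1]\!](f)\wedge\mathrm{vc}[\![C_2]\!](f)$ for guarded and probabilistic choices; $\mathfrak{C}(\mathtt{while}(\varphi)\{C'\}[I],f)\wedge\mathrm{vc}[\![C']\!](I)$ for loops. *)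

theory Defs
  imports Main "HOL-Library.Extended_Nonnegative_Real"
begin

typedef state = "{\<sigma> :: nat \<Rightarrow> rat. (\<forall>x. \<sigma> x \<ge> 0) \<and> finite {x. \<sigma> x \<noteq> 0}}"
  by (rule exI[of _ "\<lambda>_. 0"]) simp

definition upd :: "state \<Rightarrow> nat \<Rightarrow> rat \<Rightarrow> state" where
  "upd \<sigma> x v = Abs_state ((Rep_state \<sigma>)(x := v))"

type_synonym pred = "state \<Rightarrow> bool"
type_synonym expect = "state \<Rightarrow> ennreal"

definition iv :: "pred \<Rightarrow> expect" where
  "iv \<phi> = (\<lambda>\<sigma>. if \<phi> \<sigma> then 1 else 0)"

definition guard_to :: "pred \<Rightarrow> expect \<Rightarrow> expect" where
  "guard_to \<phi> g = (\<lambda>\<sigma>. if \<phi> \<sigma> then g \<sigma> else \<infinity>)"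

definition subst :: "expect \<Rightarrow> nat \<Rightarrow> (state \<Rightarrow> rat) \<Rightarrow> expect" where
  "subst f x E = (\<lambda>\<sigma>. f (upd \<sigma> x (E \<sigma>)))"

datatype pgcl =
    Skip
  | Assign nat "state \<Rightarrow> rat"
  | Seq pgcl pgcl
  | GChoice pred pgcl pred pgcl
  | PChoice pgcl "state \<Rightarrow> real" pgcl
  | While pred pgcl expect         \<comment> \<open>while(phi){C}[I]\<close>

primrec wf_pgcl :: "pgcl \<Rightarrow> bool" where
  "wf_pgcl Skip = True"
| "wf_pgcl (Assign x E) = (\<forall>\<sigma>. E \<sigma> \<ge> 0)"
| "wf_pgcl (Seq C1 C2) = (wf_pgcl C1 \<and> wf_pgcl C2)"
| "wf_pgcl (GChoice \<phi>1 C1 \<phi>2 C2) = ((\<forall>\<sigma>. \<phi>1 \<sigma> \<or> \<phi>2 \<sigma>) \<and> wf_pgcl C1 \<and> wf_pgcl C2)"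
| "wf_pgcl (PChoice C1 p C2) = ((\<forall>\<sigma>. 0 \<le> p \<sigma> \<and> p \<sigma> \<le> 1) \<and> wf_pgcl C1 \<and> wf_pgcl C2)"
| "wf_pgcl (While \<phi> C I) = wf_pgcl C"

definition pmix :: "(state \<Rightarrow> real) \<Rightarrow> expect \<Rightarrow> expect \<Rightarrow> expect" where
  "pmix p g h = (\<lambda>\<sigma>. ennreal (p \<sigma>) * g \<sigma> + ennreal (1 - p \<sigma>) * h \<sigma>)"

definition loop_char :: "pred \<Rightarrow> (expect \<Rightarrow> expect) \<Rightarrow> expect \<Rightarrow> expect \<Rightarrow> expect" where
  "loop_char \<phi> T f g = (\<lambda>\<sigma>. iv (\<lambda>s. \<not> \<phi> s) \<sigma> * f \<sigma> + iv \<phi> \<sigma> * T g \<sigma>)"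

primrec dwp :: "pgcl \<Rightarrow> expect \<Rightarrow> expect" where
  "dwp Skip f = f"
| "dwp (Assign x E) f = subst f x E"
| "dwp (Seq C1 C2) f = dwp C1 (dwp C2 f)"
| "dwp (GChoice \<phi>1 C1 \<phi>2 C2) f =
     (\<lambda>\<sigma>. min (guard_to \<phi>1 (dwp C1 f) \<sigma>) (guard_to \<phi>2 (dwp C2 f) \<sigma>))"
| "dwp (PChoice C1 p C2) f = pmix p (dwp C1 f) (dwp C2 f)"
| "dwp (While \<phi> C I) f = lfp (loop_char \<phi> (dwp C) f)"

primrec awp :: "pgcl \<Rightarrow> expect \<Rightarrow> expect" where
  "awp Skip f = f"
| "awp (Assign x E) f = subst f x E"
| "awp (Seq C1 C2) f = awp C1 (awp C2 f)"
| "awp (GChoice \<phi>1 C1 \<phi>2 C2) f =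
     (\<lambda>\<sigma>. max (iv \<phi>1 \<sigma> * awp C1 f \<sigma>) (iv \<phi>2 \<sigma> * awp C2 f \<sigma>))"
| "awp (PChoice C1 p C2) f = pmix p (awp C1 f) (awp C2 f)"
| "awp (While \<phi> C I) f = lfp (loop_char \<phi> (awp C) f)"

primrec awp_star :: "pgcl \<Rightarrow> expect \<Rightarrow> expect" where
  "awp_star Skip f = f"
| "awp_star (Assign x E) f = subst f x E"
| "awp_star (Seq C1 C2) f = awp_star C1 (awp_star C2 f)"
| "awp_star (GChoice \<phi>1 C1 \<phi>2 C2) f =
     (\<lambda>\<sigma>. max (iv \<phi>1 \<sigma> * awp_star C1 f \<sigma>) (iv \<phi>2 \<sigma> * awp_star C2 f \<sigma>))"
| "awp_star (PChoice C1 p C2) f = pmix p (awp_star C1 f) (awp_star C2 f)"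
| "awp_star (While \<phi> C I) f = I"

primrec ert :: "pgcl \<Rightarrow> expect \<Rightarrow> expect" where
  "ert Skip f = (\<lambda>\<sigma>. 1 + f \<sigma>)"
| "ert (Assign x E) f = (\<lambda>\<sigma>. 1 + subst f x E \<sigma>)"
| "ert (Seq C1 C2) f = ert C1 (ert C2 f)"
| "ert (GChoice \<phi>1 C1 \<phi>2 C2) f =
     (\<lambda>\<sigma>. 1 + max (iv \<phi>1 \<sigma> * ert C1 f \<sigma>) (iv \<phi>2 \<sigma> * ert C2 f \<sigma>))"
| "ert (PChoice C1 p C2) f = (\<lambda>\<sigma>. 1 + pmix p (ert C1 f) (ert C2 f) \<sigma>)"
| "ert (While \<phi> C I) f = lfp (\<lambda>g \<sigma>. 1 + loop_char \<phi> (ert C) f g \<sigma>)"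

definition dPAST :: "pgcl \<Rightarrow> bool" where
  "dPAST C = (\<forall>\<sigma>. ert C (\<lambda>_. 0) \<sigma> < \<infinity>)"

text \<open>Absolute difference on ennreal (exact whenever both arguments are finite).\<close>
definition adiff :: "ennreal \<Rightarrow> ennreal \<Rightarrow> ennreal" where
  "adiff a b = (a - b) + (b - a)"

definition suitable_os :: "pred \<Rightarrow> pgcl \<Rightarrow> expect \<Rightarrow> expect \<Rightarrow> bool" where
  "suitable_os \<phi> Cb I f =
     ((\<exists>I'. I = (\<lambda>\<sigma>. iv \<phi> \<sigma> * I' \<sigma> + iv (\<lambda>s. \<not> \<phi> s) \<sigma> * f \<sigma>)) \<and>
      (\<forall>\<sigma>. f \<sigma> < \<infinity>) \<and> (\<forall>\<sigma>. I \<sigma> < \<infinity>) \<and>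
      (\<forall>\<sigma>. iv \<phi> \<sigma> * awp Cb I \<sigma> + iv (\<lambda>s. \<not> \<phi> s) \<sigma> * f \<sigma> < \<infinity>) \<and>
      (\<exists>b::real. b \<ge> 0 \<and>
         (\<forall>\<sigma>. iv \<phi> \<sigma> * awp Cb (\<lambda>\<tau>. adiff (I \<tau>) (I \<sigma>)) \<sigma> \<le> ennreal b)))"

type_synonym provider = "pgcl \<Rightarrow> expect \<Rightarrow> bool"

fun dPASTSUBINV :: provider where
  "dPASTSUBINV (While \<phi> Cb I) g =
     ((\<forall>\<sigma>. I \<sigma> \<le> iv \<phi> \<sigma> * awp_star Cb I \<sigma> + iv (\<lambda>s. \<not> \<phi> s) \<sigma> * g \<sigma>) \<and>
      dPAST (While \<phi> Cb I) \<and> suitable_os \<phi> Cb I g)"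
| "dPASTSUBINV _ g = False"

primrec vc_awp :: "provider \<Rightarrow> pgcl \<Rightarrow> expect \<Rightarrow> bool" where
  "vc_awp P Skip f = True"
| "vc_awp P (Assign x E) f = True"
| "vc_awp P (Seq C1 C2) f = (vc_awp P C1 (awp_star C2 f) \<and> vc_awp P C2 f)"
| "vc_awp P (GChoice \<phi>1 C1 \<phi>2 C2) f = (vc_awp P C1 f \<and> vc_awp P C2 f)"
| "vc_awp P (PChoice C1 p C2) f = (vc_awp P C1 f \<and> vc_awp P C2 f)"
| "vc_awp P (While \<phi> C I) f = (P (While \<phi> C I) f \<and> vc_awp P C I)"

end

(*
  Fix e > 0.  The awp of the loop body is the supremum of the expectations of the
  subdistributions of final states obtained by resolving its nondeterminism, so some kernel K
  resolves it e-optimally for I in every state.  Running the loop with K gives a sub-stochastic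
  Markov chain with step operator P g = [phi] E_K g, whose expected number of iterations is
  bounded by the (finite) ert R of the loop, and sub-invariance gives I <= [~phi] f + e + P I.
  Unfolding this n times and comparing with the fixpoint awp(loop)(f) yields
  I <= awp(loop)(f) + e R + P^n I.

  The remainder P^n I is the expectation of I after n iterations on runs still inside the loop.
  Along a run, I stays below its initial value plus the running total S of the increments
  |I(next) - I(current)|; by the bounded-difference condition the expected value of S at the
  stopping time is at most I + b R < oo.  Hence P^n I is bounded by a tail of a convergent series
  and vanishes (optional stopping).  Letting e -> 0 gives I <= awp(loop)(f).  The verification
  condition provides these hypotheses for every loop, and nested loops are handled by induction
  on the program, which shows awp* <= awp.
*)

theory Submission
  imports Defs "HOL-Probability.Probability_Mass_Function"
begin

section \<open>Subdistributions\<close>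

(* A subdistribution on 'a is a distribution on 'a option; the mass on None is lost. *)
definition Esub :: "'a option pmf \<Rightarrow> ('a \<Rightarrow> ennreal) \<Rightarrow> ennreal" where
  "Esub \<mu> g = (\<integral>\<^sup>+z. case_option 0 g z \<partial>measure_pmf \<mu>)"

lemma Esub_return_None [simp]: "Esub (return_pmf None) g = 0"
  by (simp add: Esub_def nn_integral_return)

lemma Esub_return_Some [simp]: "Esub (return_pmf (Some x)) g = g x"
  by (simp add: Esub_def nn_integral_return)

lemma Esub_map_pmf_map_option: "Esub (map_pmf (map_option h) \<mu>) g = Esub \<mu> (\<lambda>x. g (h x))"
  unfolding Esub_def by (auto intro!: nn_integral_cong split: option.splits)

lemma Esub_mono: "(\<And>x. g x \<le> h x) \<Longrightarrow> Esub \<mu> g \<le> Esub \<mu> h"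
  unfolding Esub_def by (rule nn_integral_mono) (auto split: option.splits)

lemma Esub_add: "Esub \<mu> (\<lambda>x. g x + h x) = Esub \<mu> g + Esub \<mu> h"
proof -
  have "Esub \<mu> (\<lambda>x. g x + h x) = (\<integral>\<^sup>+z. case_option 0 g z + case_option 0 h z \<partial>measure_pmf \<mu>)"
    unfolding Esub_def by (rule nn_integral_cong) (auto split: option.splits)
  then show ?thesis
    unfolding Esub_def by (simp add: nn_integral_add)
qed

lemma Esub_cmult: "Esub \<mu> (\<lambda>x. c * g x) = c * Esub \<mu> g"
proof -
  have "Esub \<mu> (\<lambda>x. c * g x) = (\<integral>\<^sup>+z. c * case_option 0 g z \<partial>measure_pmf \<mu>)"
    unfolding Esub_def by (rule nn_integral_cong) (auto split: option.splits)
  then show ?thesis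
    unfolding Esub_def by (simp add: nn_integral_cmult)
qed

lemma Esub_const: "Esub \<mu> (\<lambda>_. c) = c * Esub \<mu> (\<lambda>_. 1)"
  using Esub_cmult[of \<mu> c "\<lambda>_. 1"] by simp

lemma Esub_sum: "Esub \<mu> (\<lambda>x. \<Sum>k\<in>A. g k x) = (\<Sum>k\<in>A. Esub \<mu> (g k))"
proof -
  have "Esub \<mu> (\<lambda>x. \<Sum>k\<in>A. g k x) = (\<integral>\<^sup>+z. (\<Sum>k\<in>A. case_option 0 (g k) z) \<partial>measure_pmf \<mu>)"
    unfolding Esub_def by (rule nn_integral_cong) (auto split: option.splits)
  then show ?thesis
    unfolding Esub_def by (simp add: nn_integral_sum)
qed

lemma Esub_suminf: "Esub \<mu> (\<lambda>x. \<Sum>k. g k x) = (\<Sum>k. Esub \<mu> (g k))"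
proof -
  have "Esub \<mu> (\<lambda>x. \<Sum>k. g k x) = (\<integral>\<^sup>+z. (\<Sum>k. case_option 0 (g k) z) \<partial>measure_pmf \<mu>)"
    unfolding Esub_def by (rule nn_integral_cong) (auto split: option.splits)
  then show ?thesis
    unfolding Esub_def by (simp add: nn_integral_suminf)
qed

lemma Esub_SUP:
  assumes "\<And>i x. g i x \<le> g (Suc i) x"
  shows "Esub \<mu> (\<lambda>x. SUP i. g i x) = (SUP i. Esub \<mu> (g i))"
proof -
  have "Esub \<mu> (\<lambda>x. SUP i. g i x) = (\<integral>\<^sup>+z. (SUP i. case_option 0 (g i) z) \<partial>measure_pmf \<mu>)"
    unfolding Esub_def by (rule nn_integral_cong) (auto split: option.splits)
  also have "\<dots> = (SUP i. Esub \<mu> (g i))"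
    unfolding Esub_def using assms
    by (intro nn_integral_monotone_convergence_SUP incseq_SucI) (auto simp: le_fun_def split: option.splits)
  finally show ?thesis .
qed

lemma Esub_one_le: "Esub \<mu> (\<lambda>_. 1) \<le> 1"
proof -
  have "Esub \<mu> (\<lambda>_. 1) \<le> (\<integral>\<^sup>+z. 1 \<partial>measure_pmf \<mu>)"
    unfolding Esub_def by (rule nn_integral_mono) (auto split: option.splits)
  then show ?thesis
    by (simp add: measure_pmf.emeasure_space_1)
qed

definition bind_sub :: "'a option pmf \<Rightarrow> ('a \<Rightarrow> 'b option pmf) \<Rightarrow> 'b option pmf" where
  "bind_sub \<mu> \<nu> = bind_pmf \<mu> (case_option (return_pmf None) \<nu>)"

lemma Esub_bind_sub: "Esub (bind_sub \<mu> \<nu>) g = Esub \<mu> (\<lambda>x. Esub (\<nu> x) g)"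
  unfolding bind_sub_def Esub_def nn_integral_bind_pmf
  by (rule nn_integral_cong) (auto split: option.splits simp: nn_integral_return Esub_def)

(* For each y the supremum is the limit of an increasing sequence of values Esub \<nu> h;
   monotone convergence moves the limit out of Esub \<mu>. *)
lemma Esub_SUP_le_SUP_bind_sub:
  assumes nonempty: "\<And>y. S y \<noteq> {}" and bind: "\<And>\<nu>. (\<And>y. \<nu> y \<in> S y) \<Longrightarrow> bind_sub \<mu> \<nu> \<in> T"
  shows "Esub \<mu> (\<lambda>y. SUP \<nu>\<in>S y. Esub \<nu> h) \<le> (SUP \<nu>\<in>T. Esub \<nu> h)"
proof -
  have "\<forall>y. \<exists>u. incseq u \<and> range u \<subseteq> (\<lambda>\<nu>. Esub \<nu> h) ` S y \<and> (SUP \<nu>\<in>S y. Esub \<nu> h) = (SUP i. u i)"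
  proof
    fix y
    show "\<exists>u. incseq u \<and> range u \<subseteq> (\<lambda>\<nu>. Esub \<nu> h) ` S y \<and> (SUP \<nu>\<in>S y. Esub \<nu> h) = (SUP i. u i)"
      by (rule ennreal_Sup_countable_SUP) (simp add: nonempty)
  qed
  from choice[OF this] obtain u where u: "\<And>y. incseq (u y)" "\<And>y. range (u y) \<subseteq> (\<lambda>\<nu>. Esub \<nu> h) ` S y"
    "\<And>y. (SUP \<nu>\<in>S y. Esub \<nu> h) = (SUP i. u y i)"
    by blast
  have "\<forall>i. \<exists>f. \<forall>y. f y \<in> S y \<and> u y i = Esub (f y) h"
    using u(2) by (intro allI choice) blast
  from choice[OF this] obtain \<nu> where \<nu>: "\<And>i y. \<nu> i y \<in> S y" "\<And>i y. u y i = Esub (\<nu> i y) h"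
    by blast
  have "Esub \<mu> (\<lambda>y. SUP \<nu>\<in>S y. Esub \<nu> h) = (SUP i. Esub \<mu> (\<lambda>y. u y i))"
    unfolding u(3) using u(1) by (intro Esub_SUP) (simp add: incseq_Suc_iff)
  also have "\<dots> \<le> (SUP \<nu>\<in>T. Esub \<nu> h)"
  proof (rule SUP_least)
    fix i
    have "Esub \<mu> (\<lambda>y. u y i) = Esub (bind_sub \<mu> (\<nu> i)) h"
      by (simp add: \<nu>(2) Esub_bind_sub)
    also have "\<dots> \<le> (SUP \<nu>\<in>T. Esub \<nu> h)"
      by (intro SUP_upper bind \<nu>(1))
    finally show "Esub \<mu> (\<lambda>y. u y i) \<le> (SUP \<nu>\<in>T. Esub \<nu> h)" .
  qed
  finally show ?thesis .
qed

definition mix_sub :: "real \<Rightarrow> 'a option pmf \<Rightarrow> 'a option pmf \<Rightarrow> 'a option pmf" where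
  "mix_sub p \<mu> \<nu> = bind_pmf (bernoulli_pmf p) (\<lambda>b. if b then \<mu> else \<nu>)"

lemma Esub_mix_sub:
  "0 \<le> p \<Longrightarrow> p \<le> 1 \<Longrightarrow> Esub (mix_sub p \<mu> \<nu>) g = ennreal p * Esub \<mu> g + ennreal (1 - p) * Esub \<nu> g"
  unfolding mix_sub_def Esub_def nn_integral_bind_pmf by (simp add: mult.commute)

section \<open>Loops driven by a kernel\<close>

(* (guarded_step \<phi> K ^^ n) g x is the expectation of g after n iterations, started in x, of the
   loop with guard \<phi> and body K, restricted to the runs that are still inside the loop. *)
definition guarded_step :: "('a \<Rightarrow> bool) \<Rightarrow> ('a \<Rightarrow> 'a option pmf) \<Rightarrow> ('a \<Rightarrow> ennreal) \<Rightarrow> 'a \<Rightarrow> ennreal" where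
  "guarded_step \<phi> K g x = (if \<phi> x then Esub (K x) g else 0)"

lemma guarded_step_mono: "(\<And>y. g y \<le> h y) \<Longrightarrow> guarded_step \<phi> K g x \<le> guarded_step \<phi> K h x"
  by (simp add: guarded_step_def Esub_mono)

lemma guarded_step_power_mono:
  "(\<And>y. g y \<le> h y) \<Longrightarrow> (guarded_step \<phi> K ^^ n) g x \<le> (guarded_step \<phi> K ^^ n) h x"
  by (induction n arbitrary: x) (auto intro!: guarded_step_mono)

lemma guarded_step_add:
  "guarded_step \<phi> K (\<lambda>y. g y + h y) x = guarded_step \<phi> K g x + guarded_step \<phi> K h x"
  by (simp add: guarded_step_def Esub_add)

lemma guarded_step_cmult: "c * guarded_step \<phi> K g x = guarded_step \<phi> K (\<lambda>y. c * g y) x"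
  by (simp add: guarded_step_def Esub_cmult)

lemma guarded_step_sum:
  "guarded_step \<phi> K (\<lambda>y. \<Sum>k\<in>A. g k y) x = (\<Sum>k\<in>A. guarded_step \<phi> K (g k) x)"
  by (simp add: guarded_step_def Esub_sum)

lemma guarded_step_suminf:
  "guarded_step \<phi> K (\<lambda>y. \<Sum>k. g k y) x = (\<Sum>k. guarded_step \<phi> K (g k) x)"
  by (simp add: guarded_step_def Esub_suminf)

lemma guarded_step_power_suminf:
  "(guarded_step \<phi> K ^^ n) (\<lambda>y. \<Sum>k. g k y) x = (\<Sum>k. (guarded_step \<phi> K ^^ n) (g k) x)"
proof (induction n arbitrary: x)
  case (Suc n)
  then have "(guarded_step \<phi> K ^^ n) (\<lambda>y. \<Sum>k. g k y) = (\<lambda>y. \<Sum>k. (guarded_step \<phi> K ^^ n) (g k) y)"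
    by auto
  then show ?case
    by (simp add: guarded_step_suminf)
qed simp

lemma guarded_step_one_le: "guarded_step \<phi> K (\<lambda>_. 1) x \<le> 1"
  by (simp add: guarded_step_def Esub_one_le)

lemma sum_powers_Suc:
  "(\<Sum>k<Suc n. (guarded_step \<phi> K ^^ k) c x) = c x + guarded_step \<phi> K (\<lambda>y. \<Sum>k<n. (guarded_step \<phi> K ^^ k) c y) x"
  by (simp add: sum.lessThan_Suc_shift guarded_step_sum del: sum.lessThan_Suc)

lemma le_sum_powers_plus_power:
  assumes "\<And>x. I x \<le> c x + guarded_step \<phi> K I x"
  shows "I x \<le> (\<Sum>k<n. (guarded_step \<phi> K ^^ k) c x) + (guarded_step \<phi> K ^^ n) I x"
proof (induction n arbitrary: x)
  case (Suc n)
  have "I x \<le> c x + guarded_step \<phi> K (\<lambda>y. (\<Sum>k<n. (guarded_step \<phi> K ^^ k) c y) + (guarded_step \<phi> K ^^ n) I y) x"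
    using assms by (rule order_trans) (intro add_left_mono guarded_step_mono Suc.IH)
  then show ?case
    by (simp add: sum_powers_Suc guarded_step_add add.assoc del: sum.lessThan_Suc)
qed simp

lemma sum_powers_le:
  assumes "\<And>x. c x + guarded_step \<phi> K L x \<le> L x"
  shows "(\<Sum>k<n. (guarded_step \<phi> K ^^ k) c x) \<le> L x"
proof (induction n arbitrary: x)
  case (Suc n)
  have "c x + guarded_step \<phi> K (\<lambda>y. \<Sum>k<n. (guarded_step \<phi> K ^^ k) c y) x \<le> c x + guarded_step \<phi> K L x"
    by (intro add_left_mono guarded_step_mono Suc.IH)
  then show ?case
    using assms by (simp only: sum_powers_Suc) (rule order_trans)
qed simp

(* The n-th power maps the series to its tail from n on. *)
lemma guarded_step_power_tail:
  assumes finite: "(\<Sum>k. (guarded_step \<phi> K ^^ k) c z) < \<infinity>" and "0 < e"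
  shows "\<exists>n. (guarded_step \<phi> K ^^ n) (\<lambda>y. \<Sum>k. (guarded_step \<phi> K ^^ k) c y) z \<le> ennreal e"
proof -
  let ?P = "guarded_step \<phi> K" and ?S = "\<lambda>y. \<Sum>k. (guarded_step \<phi> K ^^ k) c y"
  have split: "?S z = (?P ^^ n) ?S z + (\<Sum>k<n. (?P ^^ k) c z)" for n
  proof -
    have shift: "(?P ^^ n) ((?P ^^ k) c) = (?P ^^ (k + n)) c" for k
      by (simp only: add.commute[of k n] funpow_add comp_apply)
    have "(?P ^^ n) ?S z = (\<Sum>k. (?P ^^ n) ((?P ^^ k) c) z)"
      by (rule guarded_step_power_suminf)
    also have "\<dots> = (\<Sum>k. (?P ^^ (k + n)) c z)"
      by (simp only: shift)
    finally show ?thesis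
      by (simp add: suminf_offset[of "\<lambda>k. (?P ^^ k) c z" n])
  qed
  have "?S z < ?S z + ennreal e"
    using finite \<open>0 < e\<close> by (simp add: ennreal_add_left_cancel_less[of _ 0, simplified])
  also have "\<dots> = (SUP n. (\<Sum>k<n. (?P ^^ k) c z) + ennreal e)"
    by (simp add: suminf_eq_SUP ennreal_SUP_add_left)
  finally obtain n where n: "?S z < (\<Sum>k<n. (?P ^^ k) c z) + ennreal e"
    by (auto simp: less_SUP_iff)
  have "(\<Sum>k<n. (?P ^^ k) c z) \<le> ?S z"
    by (rule sum_le_suminf) auto
  then have "(\<Sum>k<n. (?P ^^ k) c z) < \<infinity>"
    using finite by (rule le_less_trans)
  moreover have "(\<Sum>k<n. (?P ^^ k) c z) + (?P ^^ n) ?S z < (\<Sum>k<n. (?P ^^ k) c z) + ennreal e"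
    using n by (subst (asm) split[of n]) (simp add: add.commute)
  ultimately show ?thesis
    by (auto simp: ennreal_add_left_cancel_less intro: less_imp_le)
qed

lemma exists_le_of_linear_bound:
  fixes t :: "nat \<Rightarrow> ennreal"
  assumes bound: "\<And>m. of_nat m * t m \<le> c" and "c < \<infinity>" and "0 < e"
  shows "\<exists>m. t m \<le> ennreal e"
proof (rule ccontr)
  assume "\<nexists>m. t m \<le> ennreal e"
  then have less: "ennreal e < t m" for m
    by (simp add: not_le)
  obtain r where r: "c = ennreal r" "0 \<le> r"
    using \<open>c < \<infinity>\<close> by (cases c) (auto simp: infinity_ennreal_def)
  obtain m :: nat where m: "r / e < real m"
    using reals_Archimedean2 by blast
  have "ennreal (real m * e) = of_nat m * ennreal e"
    using \<open>0 < e\<close> by (simp add: ennreal_mult ennreal_of_nat_eq_real_of_nat)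
  also have "\<dots> \<le> of_nat m * t m"
    using less[of m] by (intro mult_left_mono) auto
  also have "\<dots> \<le> ennreal r"
    using bound[of m] r by simp
  finally have "real m * e \<le> r"
    using r(2) by (simp add: ennreal_le_iff)
  with m \<open>0 < e\<close> show False
    by (simp add: field_simps)
qed

(* R bounds the expected number of iterations; in the application it is the ert of the loop. *)
locale bounded_runtime_kernel =
  fixes \<phi> :: "'a \<Rightarrow> bool" and K :: "'a \<Rightarrow> 'a option pmf" and R :: "'a \<Rightarrow> ennreal"
  assumes runtime_finite: "R x < \<infinity>"
    and runtime_step: "1 + guarded_step \<phi> K R x \<le> R x"
begin

abbreviation step :: "('a \<Rightarrow> ennreal) \<Rightarrow> 'a \<Rightarrow> ennreal" where
  "step \<equiv> guarded_step \<phi> K"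

(* The probability of stopping at x: the guard fails or the body loses mass.
   Dually, (step ^^ m) (\<lambda>_. 1) x is the probability of surviving m iterations. *)
definition halt :: "'a \<Rightarrow> ennreal" where
  "halt x = 1 - step (\<lambda>_. 1) x"

(* The expected value of v at the stopping time. *)
definition stopped_value :: "('a \<Rightarrow> ennreal) \<Rightarrow> 'a \<Rightarrow> ennreal" where
  "stopped_value v = (\<lambda>z. \<Sum>k. (step ^^ k) (\<lambda>y. halt y * v y) z)"

lemma halt_plus_step_one: "halt x + step (\<lambda>_. 1) x = 1"
  by (simp add: halt_def diff_add_cancel_ennreal guarded_step_one_le)

lemma halt_plus_survival: "1 \<le> (\<Sum>k<m. (step ^^ k) halt x) + (step ^^ m) (\<lambda>_. 1) x"
proof (induction m arbitrary: x)
  case (Suc m)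
  have "1 = halt x + step (\<lambda>_. 1) x"
    by (simp add: halt_plus_step_one)
  also have "\<dots> \<le> halt x + step (\<lambda>y. (\<Sum>k<m. (step ^^ k) halt y) + (step ^^ m) (\<lambda>_. 1) y) x"
    by (intro add_left_mono guarded_step_mono Suc.IH)
  also have "\<dots> = (\<Sum>k<Suc m. (step ^^ k) halt x) + (step ^^ Suc m) (\<lambda>_. 1) x"
    by (simp only: sum_powers_Suc guarded_step_add add.assoc funpow.simps comp_apply)
  finally show ?case .
qed simp

lemma survival_le_one: "(step ^^ m) (\<lambda>_. 1) x \<le> 1"
proof (induction m arbitrary: x)
  case (Suc m)
  have "step ((step ^^ m) (\<lambda>_. 1)) x \<le> step (\<lambda>_. 1) x"
    by (intro guarded_step_mono Suc.IH)
  then show ?case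
    using guarded_step_one_le[of \<phi> K x] by simp
qed simp

lemma survival_antimono:
  assumes "k \<le> m"
  shows "(step ^^ m) (\<lambda>_. 1) x \<le> (step ^^ k) (\<lambda>_. 1) x"
proof -
  have "(step ^^ m) (\<lambda>_. 1) x = (step ^^ k) ((step ^^ (m - k)) (\<lambda>_. 1)) x"
    using assms by (metis comp_apply funpow_add le_add_diff_inverse)
  also have "\<dots> \<le> (step ^^ k) (\<lambda>_. 1) x"
    by (intro guarded_step_power_mono survival_le_one)
  finally show ?thesis .
qed

lemma survival_le: "of_nat m * (step ^^ m) (\<lambda>_. 1) x \<le> R x"
proof -
  have "of_nat m * (step ^^ m) (\<lambda>_. 1) x = (\<Sum>k<m. (step ^^ m) (\<lambda>_. 1) x)"
    by simp
  also have "\<dots> \<le> (\<Sum>k<m. (step ^^ k) (\<lambda>_. 1) x)"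
    by (intro sum_mono survival_antimono) simp
  also have "\<dots> \<le> R x"
    by (rule sum_powers_le) (rule runtime_step)
  finally show ?thesis .
qed

lemma mult_sum_halt_le:
  assumes mult: "\<And>x g. v x * step g x \<le> step (\<lambda>y. v y * g y) x"
  shows "v x * (\<Sum>k<m. (step ^^ k) halt x) \<le> (\<Sum>k<m. (step ^^ k) (\<lambda>y. halt y * v y) x)"
proof (induction m arbitrary: x)
  case (Suc m)
  have "v x * (\<Sum>k<Suc m. (step ^^ k) halt x) = halt x * v x + v x * step (\<lambda>y. \<Sum>k<m. (step ^^ k) halt y) x"
    by (simp only: sum_powers_Suc distrib_left mult.commute)
  also have "\<dots> \<le> halt x * v x + step (\<lambda>y. v y * (\<Sum>k<m. (step ^^ k) halt y)) x"
    by (intro add_left_mono mult)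
  also have "\<dots> \<le> halt x * v x + step (\<lambda>y. \<Sum>k<m. (step ^^ k) (\<lambda>y. halt y * v y) y) x"
    by (intro add_left_mono guarded_step_mono Suc.IH)
  finally show ?case
    by (simp only: sum_powers_Suc)
qed simp

(* The hypothesis says that v does not decrease along transitions; termination with
   probability one (survival_le) then loses none of v. *)
lemma stopped_value_ge:
  assumes mult: "\<And>x g. v x * step g x \<le> step (\<lambda>y. v y * g y) x" and "v z < \<infinity>"
  shows "v z \<le> stopped_value v z"
proof (rule ennreal_le_epsilon)
  fix e :: real
  assume "0 < e"
  have "of_nat m * (v z * (step ^^ m) (\<lambda>_. 1) z) \<le> v z * R z" for m
    using mult_left_mono[OF survival_le, of "v z" m z] by (simp add: ac_simps)
  moreover have "v z * R z < \<infinity>"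
    using \<open>v z < \<infinity>\<close> runtime_finite by (simp add: ennreal_mult_less_top)
  ultimately obtain m where m: "v z * (step ^^ m) (\<lambda>_. 1) z \<le> ennreal e"
    using exists_le_of_linear_bound[of "\<lambda>m. v z * (step ^^ m) (\<lambda>_. 1) z"] \<open>0 < e\<close> by blast
  have "v z \<le> v z * ((\<Sum>k<m. (step ^^ k) halt z) + (step ^^ m) (\<lambda>_. 1) z)"
    using mult_left_mono[OF halt_plus_survival, of "v z"] by simp
  also have "\<dots> \<le> (\<Sum>k<m. (step ^^ k) (\<lambda>y. halt y * v y) z) + ennreal e"
    unfolding distrib_left by (intro add_mono mult_sum_halt_le[OF mult] m)
  also have "(\<Sum>k<m. (step ^^ k) (\<lambda>y. halt y * v y) z) \<le> stopped_value v z"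
    unfolding stopped_value_def by (rule sum_le_suminf) auto
  finally show "v z \<le> stopped_value v z + ennreal e"
    by (simp add: add_right_mono)
qed

lemma stopped_value_le:
  assumes increment: "\<And>x. \<phi> x \<Longrightarrow> Esub (K x) v \<le> Esub (K x) (\<lambda>_. 1) * v x + ennreal b"
  shows "stopped_value v z \<le> v z + ennreal b * R z"
proof -
  have one_step: "halt x * v x + step v x \<le> v x + ennreal b" for x
  proof (cases "\<phi> x")
    case True
    have "halt x * v x + step v x \<le> halt x * v x + (step (\<lambda>_. 1) x * v x + ennreal b)"
      using increment[OF True] True by (simp add: guarded_step_def)
    also have "\<dots> = (halt x + step (\<lambda>_. 1) x) * v x + ennreal b"
      by (simp add: distrib_right add.assoc)
    finally show ?thesis
      by (simp add: halt_plus_step_one)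
  qed (simp add: halt_def guarded_step_def)
  have "(\<Sum>k<m. (step ^^ k) (\<lambda>y. halt y * v y) z) \<le> v z + ennreal b * R z" for m
  proof (rule sum_powers_le)
    fix x
    have "halt x * v x + step (\<lambda>y. v y + ennreal b * R y) x
        = (halt x * v x + step v x) + ennreal b * step R x"
      by (simp add: guarded_step_add guarded_step_cmult add.assoc)
    also have "\<dots> \<le> v x + ennreal b * (1 + step R x)"
      using one_step by (simp add: distrib_left add.assoc add_right_mono)
    also have "\<dots> \<le> v x + ennreal b * R x"
      by (intro add_left_mono mult_left_mono runtime_step) simp
    finally show "halt x * v x + step (\<lambda>y. v y + ennreal b * R y) x \<le> v x + ennreal b * R x" .
  qed
  then show ?thesis
    unfolding stopped_value_def suminf_eq_SUP by (simp add: SUP_least)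
qed

end

section \<open>Optional stopping\<close>

(* The chain extended by a running total of the increments d. *)
definition accum_kernel ::
    "('a \<Rightarrow> 'a option pmf) \<Rightarrow> ('a \<Rightarrow> 'a \<Rightarrow> ennreal) \<Rightarrow> 'a \<times> ennreal \<Rightarrow> ('a \<times> ennreal) option pmf" where
  "accum_kernel K d z = map_pmf (map_option (\<lambda>y. (y, snd z + d (fst z) y))) (K (fst z))"

lemma Esub_accum_kernel: "Esub (accum_kernel K d (x, s)) G = Esub (K x) (\<lambda>y. G (y, s + d x y))"
  by (simp add: accum_kernel_def Esub_map_pmf_map_option)

lemma guarded_step_accum_kernel:
  "guarded_step (\<lambda>z. \<phi> (fst z)) (accum_kernel K d) G (x, s) = guarded_step \<phi> K (\<lambda>y. G (y, s + d x y)) x"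
  by (simp add: guarded_step_def Esub_accum_kernel)

lemma guarded_step_power_le_accum_kernel:
  assumes increment: "\<And>x y. I y \<le> I x + d x y" and finite: "\<And>x y. d x y < \<infinity>"
    and V: "\<And>y t. t < \<infinity> \<Longrightarrow> t \<le> V (y, t)"
    and "s < \<infinity>" and "I x \<le> s"
  shows "(guarded_step \<phi> K ^^ n) I x \<le> (guarded_step (\<lambda>z. \<phi> (fst z)) (accum_kernel K d) ^^ n) V (x, s)"
  using assms(4,5)
proof (induction n arbitrary: x s)
  case 0
  then show ?case
    using V[of s x] by simp
next
  case (Suc n)
  have "guarded_step \<phi> K ((guarded_step \<phi> K ^^ n) I) x
      \<le> guarded_step \<phi> K (\<lambda>y. (guarded_step (\<lambda>z. \<phi> (fst z)) (accum_kernel K d) ^^ n) V (y, s + d x y)) x"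
  proof (intro guarded_step_mono Suc.IH)
    fix y
    show "s + d x y < \<infinity>"
      using Suc.prems(1) finite by (simp add: less_top)
    show "I y \<le> s + d x y"
      using increment[of y x] Suc.prems(2) by (meson add_right_mono order_trans)
  qed
  then show ?case
    by (simp add: guarded_step_accum_kernel)
qed

lemma adiff_finite: "a < \<infinity> \<Longrightarrow> b < \<infinity> \<Longrightarrow> adiff a b < \<infinity>"
  unfolding adiff_def infinity_ennreal_def by (simp add: diff_less_top_ennreal)

lemma le_plus_adiff: "a \<le> b + adiff a b"
proof -
  have "a \<le> b + (a - b)"
    by (auto simp: add_diff_self_ennreal not_le intro: less_imp_le)
  also have "\<dots> \<le> b + adiff a b"
    unfolding adiff_def by (intro add_left_mono add_increasing2) auto
  finally show ?thesis .
qed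

context bounded_runtime_kernel
begin

lemma accum_kernel_bounded_runtime:
  "bounded_runtime_kernel (\<lambda>z. \<phi> (fst z)) (accum_kernel K d) (\<lambda>z. R (fst z))"
proof
  fix z :: "'a \<times> ennreal"
  show "(\<lambda>z. R (fst z)) z < \<infinity>"
    using runtime_finite by simp
  show "1 + guarded_step (\<lambda>z. \<phi> (fst z)) (accum_kernel K d) (\<lambda>z. R (fst z)) z \<le> (\<lambda>z. R (fst z)) z"
    using runtime_step by (cases z) (simp add: guarded_step_accum_kernel)
qed

abbreviation stopped_total :: "('a \<Rightarrow> 'a \<Rightarrow> ennreal) \<Rightarrow> 'a \<times> ennreal \<Rightarrow> ennreal" where
  "stopped_total d \<equiv> bounded_runtime_kernel.stopped_value (\<lambda>z. \<phi> (fst z)) (accum_kernel K d) snd"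

lemma stopped_total_ge: "s < \<infinity> \<Longrightarrow> s \<le> stopped_total d (x, s)"
proof -
  interpret acc: bounded_runtime_kernel "\<lambda>z. \<phi> (fst z)" "accum_kernel K d" "\<lambda>z. R (fst z)"
    by (rule accum_kernel_bounded_runtime)
  assume "s < \<infinity>"
  then have "snd (x, s) \<le> stopped_total d (x, s)"
  proof (intro acc.stopped_value_ge)
    fix z :: "'a \<times> ennreal" and g
    obtain y t where z: "z = (y, t)"
      by (cases z)
    have "t * Esub (K y) (\<lambda>w. g (w, t + d y w)) \<le> Esub (K y) (\<lambda>w. (t + d y w) * g (w, t + d y w))"
      unfolding Esub_cmult[symmetric] by (intro Esub_mono mult_right_mono) auto
    then show "snd z * acc.step g z \<le> acc.step (\<lambda>w. snd w * g w) z"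
      by (simp add: z guarded_step_def Esub_accum_kernel)
  qed simp
  then show ?thesis
    by simp
qed

lemma stopped_total_le:
  assumes "\<And>x. \<phi> x \<Longrightarrow> Esub (K x) (d x) \<le> ennreal b"
  shows "stopped_total d (x, s) \<le> s + ennreal b * R x"
proof -
  interpret acc: bounded_runtime_kernel "\<lambda>z. \<phi> (fst z)" "accum_kernel K d" "\<lambda>z. R (fst z)"
    by (rule accum_kernel_bounded_runtime)
  have "stopped_total d (x, s) \<le> snd (x, s) + ennreal b * R (fst (x, s))"
  proof (rule acc.stopped_value_le)
    fix z :: "'a \<times> ennreal"
    assume "\<phi> (fst z)"
    obtain y t where z: "z = (y, t)"
      by (cases z)
    have "Esub (accum_kernel K d z) snd = t * Esub (K y) (\<lambda>_. 1) + Esub (K y) (d y)"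
      by (simp add: z Esub_accum_kernel Esub_add Esub_const[of _ t])
    also have "\<dots> \<le> Esub (K y) (\<lambda>_. 1) * t + ennreal b"
      using assms \<open>\<phi> (fst z)\<close> by (simp add: z mult.commute add_left_mono)
    finally show "Esub (accum_kernel K d z) snd \<le> Esub (accum_kernel K d z) (\<lambda>_. 1) * snd z + ennreal b"
      by (simp add: z Esub_accum_kernel)
  qed
  then show ?thesis
    by simp
qed

(* (step ^^ n) I x is dominated by the expected running total of |I y - I x| on runs surviving
   n iterations, i.e. by a tail of the finite series stopped_total d (x, I x). *)
lemma power_vanishes_of_bounded_increments:
  assumes I_finite: "\<And>x. I x < \<infinity>"
    and bounded: "\<And>x. \<phi> x \<Longrightarrow> Esub (K x) (\<lambda>y. adiff (I y) (I x)) \<le> ennreal b"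
    and "0 < e"
  shows "\<exists>n. (step ^^ n) I x \<le> ennreal e"
proof -
  define d where "d = (\<lambda>x y. adiff (I y) (I x))"
  interpret acc: bounded_runtime_kernel "\<lambda>z. \<phi> (fst z)" "accum_kernel K d" "\<lambda>z. R (fst z)"
    by (rule accum_kernel_bounded_runtime)
  have "stopped_total d (x, I x) \<le> I x + ennreal b * R x"
    using bounded by (intro stopped_total_le) (simp add: d_def)
  also have "\<dots> < \<infinity>"
    using I_finite runtime_finite by (simp add: ennreal_mult_less_top less_top)
  finally have "(\<Sum>k. (acc.step ^^ k) (\<lambda>z. acc.halt z * snd z) (x, I x)) < \<infinity>"
    by (simp add: acc.stopped_value_def)
  from guarded_step_power_tail[OF this \<open>0 < e\<close>]
  obtain n where n: "(acc.step ^^ n) (stopped_total d) (x, I x) \<le> ennreal e"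
    unfolding acc.stopped_value_def by blast
  have "(step ^^ n) I x \<le> (acc.step ^^ n) (stopped_total d) (x, I x)"
  proof (rule guarded_step_power_le_accum_kernel)
    show "I y \<le> I z + d z y" "d z y < \<infinity>" for z y
      using adiff_finite[OF I_finite I_finite] by (simp_all add: d_def le_plus_adiff)
  qed (use I_finite stopped_total_ge in auto)
  with n show ?thesis
    by (blast intro: order_trans)
qed

lemma le_of_approx_subinvariant:
  assumes I_finite: "\<And>x. I x < \<infinity>"
    and bounded: "\<And>x. \<phi> x \<Longrightarrow> Esub (K x) (\<lambda>y. adiff (I y) (I x)) \<le> ennreal b"
    and I_step: "\<And>x. I x \<le> c x + ennreal \<epsilon> + step I x"
    and L_step: "\<And>x. c x + step L x \<le> L x"
  shows "I x \<le> L x + ennreal \<epsilon> * R x"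
proof (rule ennreal_le_epsilon)
  fix e :: real
  assume "0 < e"
  then obtain n where n: "(step ^^ n) I x \<le> ennreal e"
    using power_vanishes_of_bounded_increments[OF I_finite bounded] by blast
  have "(\<Sum>k<n. (step ^^ k) (\<lambda>y. c y + ennreal \<epsilon>) x) \<le> L x + ennreal \<epsilon> * R x"
  proof (rule sum_powers_le)
    fix y
    have "c y + ennreal \<epsilon> + step (\<lambda>y. L y + ennreal \<epsilon> * R y) y
        = (c y + step L y) + ennreal \<epsilon> * (1 + step R y)"
      by (simp add: guarded_step_add guarded_step_cmult distrib_left ac_simps)
    also have "\<dots> \<le> L y + ennreal \<epsilon> * R y"
      by (intro add_mono L_step mult_left_mono runtime_step) simp
    finally show "c y + ennreal \<epsilon> + step (\<lambda>y. L y + ennreal \<epsilon> * R y) y \<le> L y + ennreal \<epsilon> * R y" .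
  qed
  then show "I x \<le> L x + ennreal \<epsilon> * R x + ennreal e"
    using le_sum_powers_plus_power[of I "\<lambda>y. c y + ennreal \<epsilon>", OF I_step, of x n] n
    by (meson add_mono order_trans)
qed

end

section \<open>Weakest preexpectations and expected runtimes\<close>

lemma loop_char_mono: "(\<And>g h. g \<le> h \<Longrightarrow> T g \<le> T h) \<Longrightarrow> mono (loop_char \<phi> T f)"
  by (auto simp: mono_def le_fun_def loop_char_def intro!: add_mono mult_left_mono)

lemma awp_mono: "g \<le> h \<Longrightarrow> awp C g \<le> awp C h"
proof (induction C arbitrary: g h)
  case (GChoice \<phi>1 C1 \<phi>2 C2)
  then show ?case
    unfolding le_fun_def awp.simps by (intro allI max.mono mult_left_mono) auto
next
  case (While \<phi> C I)
  then show ?case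
    unfolding awp.simps by (intro lfp_mono) (auto simp: le_fun_def loop_char_def intro!: add_mono mult_left_mono)
qed (auto simp: le_fun_def subst_def pmix_def intro!: mult_left_mono add_mono)

lemma ert_mono: "g \<le> h \<Longrightarrow> ert C g \<le> ert C h"
proof (induction C arbitrary: g h)
  case (GChoice \<phi>1 C1 \<phi>2 C2)
  then show ?case
    unfolding le_fun_def ert.simps by (intro allI add_left_mono max.mono mult_left_mono) auto
next
  case (While \<phi> C I)
  then show ?case
    unfolding ert.simps by (intro lfp_mono) (auto simp: le_fun_def loop_char_def intro!: add_mono mult_left_mono)
qed (auto simp: le_fun_def subst_def pmix_def intro!: mult_left_mono add_mono)

lemma awp_While:
  "awp (While \<phi> C I) f \<sigma> = (if \<phi> \<sigma> then awp C (awp (While \<phi> C I) f) \<sigma> else f \<sigma>)"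
proof -
  have "awp (While \<phi> C I) f = loop_char \<phi> (awp C) f (awp (While \<phi> C I) f)"
    unfolding awp.simps by (intro lfp_unfold loop_char_mono awp_mono)
  then show ?thesis
    by (subst (asm) fun_eq_iff) (simp add: loop_char_def iv_def)
qed

lemma ert_While:
  "ert (While \<phi> C I) f \<sigma> = 1 + (if \<phi> \<sigma> then ert C (ert (While \<phi> C I) f) \<sigma> else f \<sigma>)"
proof -
  have "mono (\<lambda>g \<sigma>. 1 + loop_char \<phi> (ert C) f g \<sigma>)"
    using loop_char_mono[of "ert C" \<phi> f] ert_mono by (auto simp: mono_def le_fun_def intro!: add_mono)
  then have "ert (While \<phi> C I) f = (\<lambda>\<sigma>. 1 + loop_char \<phi> (ert C) f (ert (While \<phi> C I) f) \<sigma>)"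
    unfolding ert.simps by (rule lfp_unfold)
  then show ?thesis
    by (subst (asm) fun_eq_iff) (simp add: loop_char_def iv_def)
qed

lemma awp_le_ert: "awp C g \<le> ert C g"
proof (induction C arbitrary: g)
  case (Seq C1 C2)
  have "awp C1 (awp C2 g) \<le> awp C1 (ert C2 g)"
    by (intro awp_mono Seq.IH(2))
  also have "\<dots> \<le> ert C1 (ert C2 g)"
    by (rule Seq.IH(1))
  finally show ?case
    by simp
next
  case (GChoice \<phi>1 C1 \<phi>2 C2)
  then show ?case
    unfolding le_fun_def awp.simps ert.simps by (intro allI add_increasing max.mono mult_left_mono) auto
next
  case (PChoice C1 p C2)
  then show ?case
    unfolding le_fun_def awp.simps ert.simps pmix_def by (intro allI add_increasing add_mono mult_left_mono) auto
next
  case (While \<phi> C I)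
  show ?case
    unfolding awp.simps
  proof (intro lfp_lowerbound le_funI)
    fix \<sigma>
    show "loop_char \<phi> (awp C) g (ert (While \<phi> C I) g) \<sigma> \<le> ert (While \<phi> C I) g \<sigma>"
      using While.IH[of "ert (While \<phi> C I) g"]
      by (subst ert_While) (auto simp: loop_char_def iv_def le_fun_def add_increasing)
  qed
qed (auto simp: le_fun_def)

(* Resolving the nondeterminism of C from x yields such subdistributions of final states
   (None for divergence); awp C h x is the supremum of their expectations of h. *)
definition awp_dominated :: "pgcl \<Rightarrow> state \<Rightarrow> state option pmf set" where
  "awp_dominated C x = {\<mu>. \<forall>g. Esub \<mu> g \<le> awp C g x}"

abbreviation SUP_dominated :: "pgcl \<Rightarrow> expect \<Rightarrow> state \<Rightarrow> ennreal" where
  "SUP_dominated C h x \<equiv> SUP \<mu>\<in>awp_dominated C x. Esub \<mu> h"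

lemma return_None_dominated: "return_pmf None \<in> awp_dominated C x"
  by (simp add: awp_dominated_def)

lemma awp_dominated_nonempty: "awp_dominated C x \<noteq> {}"
  using return_None_dominated by blast

lemma Esub_bind_sub_le_awp:
  assumes "\<mu> \<in> awp_dominated C1 x" and "\<And>y. \<nu> y \<in> awp_dominated C2 y"
  shows "Esub (bind_sub \<mu> \<nu>) g \<le> awp C1 (awp C2 g) x"
proof -
  have "Esub (bind_sub \<mu> \<nu>) g = Esub \<mu> (\<lambda>y. Esub (\<nu> y) g)"
    by (rule Esub_bind_sub)
  also have "\<dots> \<le> Esub \<mu> (awp C2 g)"
    using assms(2) by (intro Esub_mono) (auto simp: awp_dominated_def)
  also have "\<dots> \<le> awp C1 (awp C2 g) x"
    using assms(1) by (auto simp: awp_dominated_def)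
  finally show ?thesis .
qed

lemma awp_Seq_le_SUP_dominated:
  assumes IH1: "\<And>h x. awp C1 h x \<le> SUP_dominated C1 h x"
    and IH2: "\<And>h x. awp C2 h x \<le> SUP_dominated C2 h x"
  shows "awp (Seq C1 C2) h x \<le> SUP_dominated (Seq C1 C2) h x"
proof -
  have "awp (Seq C1 C2) h x \<le> awp C1 (SUP_dominated C2 h) x"
    using IH2 by (simp add: awp_mono le_funI le_funD)
  also have "\<dots> \<le> (SUP \<mu>\<in>awp_dominated C1 x. Esub \<mu> (SUP_dominated C2 h))"
    by (rule IH1)
  also have "\<dots> \<le> SUP_dominated (Seq C1 C2) h x"
  proof (rule SUP_least, rule Esub_SUP_le_SUP_bind_sub[OF awp_dominated_nonempty])
    fix \<mu> \<nu>
    assume "\<mu> \<in> awp_dominated C1 x" "\<And>y. \<nu> y \<in> awp_dominated C2 y"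
    then show "bind_sub \<mu> \<nu> \<in> awp_dominated (Seq C1 C2) x"
      using Esub_bind_sub_le_awp by (simp add: awp_dominated_def)
  qed
  finally show ?thesis .
qed

lemma awp_GChoice_le_SUP_dominated:
  assumes IH1: "awp C1 h x \<le> SUP_dominated C1 h x" and IH2: "awp C2 h x \<le> SUP_dominated C2 h x"
  shows "awp (GChoice \<phi>1 C1 \<phi>2 C2) h x \<le> SUP_dominated (GChoice \<phi>1 C1 \<phi>2 C2) h x"
proof -
  have branch: "iv \<phi> x * awp C h x \<le> SUP_dominated (GChoice \<phi>1 C1 \<phi>2 C2) h x"
    if IH: "awp C h x \<le> SUP_dominated C h x"
      and sub: "\<phi> x \<Longrightarrow> awp_dominated C x \<subseteq> awp_dominated (GChoice \<phi>1 C1 \<phi>2 C2) x" for \<phi> C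
  proof (cases "\<phi> x")
    case True
    have "awp C h x \<le> SUP_dominated (GChoice \<phi>1 C1 \<phi>2 C2) h x"
      using IH SUP_subset_mono[OF sub[OF True], of "\<lambda>\<mu>. Esub \<mu> h" "\<lambda>\<mu>. Esub \<mu> h"] by simp
    then show ?thesis
      using True by (simp add: iv_def)
  qed (simp add: iv_def)
  have "iv \<phi>1 x * awp C1 h x \<le> SUP_dominated (GChoice \<phi>1 C1 \<phi>2 C2) h x"
    by (rule branch[OF IH1]) (auto simp: awp_dominated_def iv_def intro: order_trans[OF _ max.cobounded1])
  moreover have "iv \<phi>2 x * awp C2 h x \<le> SUP_dominated (GChoice \<phi>1 C1 \<phi>2 C2) h x"
    by (rule branch[OF IH2]) (auto simp: awp_dominated_def iv_def intro: order_trans[OF _ max.cobounded2])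
  ultimately show ?thesis
    by simp
qed

lemma awp_PChoice_le_SUP_dominated:
  assumes p: "0 \<le> p x" "p x \<le> 1"
    and IH1: "awp C1 h x \<le> SUP_dominated C1 h x" and IH2: "awp C2 h x \<le> SUP_dominated C2 h x"
  shows "awp (PChoice C1 p C2) h x \<le> SUP_dominated (PChoice C1 p C2) h x"
proof -
  let ?a = "ennreal (p x)" and ?b = "ennreal (1 - p x)"
  have "awp (PChoice C1 p C2) h x \<le> ?a * SUP_dominated C1 h x + ?b * SUP_dominated C2 h x"
    using IH1 IH2 by (simp add: pmix_def add_mono mult_left_mono)
  also have "\<dots> = (SUP \<mu>\<in>awp_dominated C1 x. ?a * Esub \<mu> h) + (SUP \<nu>\<in>awp_dominated C2 x. ?b * Esub \<nu> h)"
    by (simp add: SUP_mult_left_ennreal)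
  also have "\<dots> = (SUP \<mu>\<in>awp_dominated C1 x. ?a * Esub \<mu> h + (SUP \<nu>\<in>awp_dominated C2 x. ?b * Esub \<nu> h))"
    by (rule ennreal_SUP_add_left[symmetric]) (rule awp_dominated_nonempty)
  also have "\<dots> = (SUP \<mu>\<in>awp_dominated C1 x. SUP \<nu>\<in>awp_dominated C2 x. ?a * Esub \<mu> h + ?b * Esub \<nu> h)"
    by (simp add: ennreal_SUP_add_right awp_dominated_nonempty)
  also have "\<dots> \<le> SUP_dominated (PChoice C1 p C2) h x"
  proof (intro SUP_least)
    fix \<mu> \<nu>
    assume "\<mu> \<in> awp_dominated C1 x" "\<nu> \<in> awp_dominated C2 x"
    then have "mix_sub (p x) \<mu> \<nu> \<in> awp_dominated (PChoice C1 p C2) x"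
      using p by (auto simp: awp_dominated_def Esub_mix_sub pmix_def intro!: add_mono mult_left_mono)
    then show "?a * Esub \<mu> h + ?b * Esub \<nu> h \<le> SUP_dominated (PChoice C1 p C2) h x"
      using p SUP_upper by (fastforce simp: Esub_mix_sub[symmetric])
  qed
  finally show ?thesis .
qed

lemma awp_While_le_SUP_dominated:
  assumes IH: "\<And>h x. awp C h x \<le> SUP_dominated C h x"
  shows "awp (While \<phi> C I) h x \<le> SUP_dominated (While \<phi> C I) h x"
proof -
  let ?A = "SUP_dominated (While \<phi> C I) h"
  have "lfp (loop_char \<phi> (awp C) h) \<le> ?A"
  proof (intro lfp_lowerbound le_funI)
    fix \<sigma>
    show "loop_char \<phi> (awp C) h ?A \<sigma> \<le> ?A \<sigma>"
    proof (cases "\<phi> \<sigma>")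
      case False
      then have "Esub (return_pmf (Some \<sigma>)) g \<le> awp (While \<phi> C I) g \<sigma>" for g
        by (subst awp_While) simp
      then have "return_pmf (Some \<sigma>) \<in> awp_dominated (While \<phi> C I) \<sigma>"
        unfolding awp_dominated_def by blast
      then have "Esub (return_pmf (Some \<sigma>)) h \<le> ?A \<sigma>"
        by (rule SUP_upper)
      then show ?thesis
        using False by (simp add: loop_char_def iv_def)
    next
      case True
      have "awp C ?A \<sigma> \<le> (SUP \<mu>\<in>awp_dominated C \<sigma>. Esub \<mu> ?A)"
        by (rule IH)
      also have "\<dots> \<le> ?A \<sigma>"
      proof (rule SUP_least, rule Esub_SUP_le_SUP_bind_sub[OF awp_dominated_nonempty])
        fix \<mu> \<nu>
        assume "\<mu> \<in> awp_dominated C \<sigma>" "\<And>y. \<nu> y \<in> awp_dominated (While \<phi> C I) y"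
        then have "Esub (bind_sub \<mu> \<nu>) g \<le> awp (While \<phi> C I) g \<sigma>" for g
          using Esub_bind_sub_le_awp[of \<mu> C \<sigma> \<nu> "While \<phi> C I" g] True by (subst awp_While) simp
        then show "bind_sub \<mu> \<nu> \<in> awp_dominated (While \<phi> C I) \<sigma>"
          unfolding awp_dominated_def by blast
      qed
      finally show ?thesis
        using True by (simp add: loop_char_def iv_def)
    qed
  qed
  then show ?thesis
    by (simp add: le_fun_def)
qed

lemma awp_le_SUP_dominated: "wf_pgcl C \<Longrightarrow> awp C h x \<le> SUP_dominated C h x"
proof (induction C arbitrary: h x)
  case Skip
  have "return_pmf (Some x) \<in> awp_dominated Skip x"
    by (simp add: awp_dominated_def)
  then have "Esub (return_pmf (Some x)) h \<le> SUP_dominated Skip h x"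
    by (rule SUP_upper)
  then show ?case
    by simp
next
  case (Assign v E)
  have "return_pmf (Some (upd x v (E x))) \<in> awp_dominated (Assign v E) x"
    by (simp add: awp_dominated_def subst_def)
  then have "Esub (return_pmf (Some (upd x v (E x)))) h \<le> SUP_dominated (Assign v E) h x"
    by (rule SUP_upper)
  then show ?case
    by (simp add: subst_def)
next
  case (Seq C1 C2)
  then show ?case
    by (intro awp_Seq_le_SUP_dominated) auto
next
  case (GChoice \<phi>1 C1 \<phi>2 C2)
  then show ?case
    by (intro awp_GChoice_le_SUP_dominated) auto
next
  case (PChoice C1 p C2)
  then show ?case
    by (intro awp_PChoice_le_SUP_dominated) auto
next
  case (While \<phi> C I)
  then show ?case
    by (intro awp_While_le_SUP_dominated) auto
qed

lemma exists_dominated_approx: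
  assumes "wf_pgcl C" and "awp C g x < \<infinity>" and "0 < \<epsilon>"
  shows "\<exists>\<mu>\<in>awp_dominated C x. awp C g x \<le> Esub \<mu> g + ennreal \<epsilon>"
proof -
  have "awp C g x < awp C g x + ennreal \<epsilon>"
    using assms(2,3) by (simp add: ennreal_add_left_cancel_less[of _ 0, simplified])
  also have "\<dots> \<le> SUP_dominated C g x + ennreal \<epsilon>"
    by (intro add_right_mono awp_le_SUP_dominated assms(1))
  also have "\<dots> = (SUP \<mu>\<in>awp_dominated C x. Esub \<mu> g + ennreal \<epsilon>)"
    by (rule ennreal_SUP_add_left[symmetric]) (rule awp_dominated_nonempty)
  finally show ?thesis
    by (auto simp: less_SUP_iff intro: less_imp_le)
qed

lemma exists_dominated_kernel_approx:
  assumes "wf_pgcl C" and "\<And>x. \<phi> x \<Longrightarrow> awp C g x < \<infinity>" and "0 < \<epsilon>"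
  shows "\<exists>K. \<forall>x. K x \<in> awp_dominated C x \<and> (\<phi> x \<longrightarrow> awp C g x \<le> Esub (K x) g + ennreal \<epsilon>)"
proof -
  have "\<exists>\<mu>. \<mu> \<in> awp_dominated C x \<and> (\<phi> x \<longrightarrow> awp C g x \<le> Esub \<mu> g + ennreal \<epsilon>)" for x
    using exists_dominated_approx[OF assms(1) assms(2)[of x] assms(3)] return_None_dominated
    by (cases "\<phi> x") blast+
  then show ?thesis
    by (rule choice[OF allI])
qed

section \<open>Soundness of the verification condition\<close>

lemma ennreal_le_of_le_plus_mult:
  fixes a b r :: ennreal
  assumes le: "\<And>\<epsilon>. 0 < \<epsilon> \<Longrightarrow> a \<le> b + ennreal \<epsilon> * r" and "r < \<infinity>"
  shows "a \<le> b"
proof (rule ennreal_le_epsilon)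
  fix e :: real
  assume "0 < e"
  obtain q where q: "r = ennreal q" "0 \<le> q"
    using \<open>r < \<infinity>\<close> by (cases r) (auto simp: infinity_ennreal_def)
  have "ennreal (e / (q + 1)) * r = ennreal (e * (q / (q + 1)))"
    using q \<open>0 < e\<close> by (simp add: ennreal_mult[symmetric])
  also have "\<dots> \<le> ennreal e"
    using q \<open>0 < e\<close> by (intro ennreal_leI) (simp add: field_simps)
  finally have "b + ennreal (e / (q + 1)) * r \<le> b + ennreal e"
    by (rule add_left_mono)
  moreover have "a \<le> b + ennreal (e / (q + 1)) * r"
    using q \<open>0 < e\<close> by (intro le) simp
  ultimately show "a \<le> b + ennreal e"
    by (rule order_trans[rotated])
qed

lemma ert_bounded_runtime_kernel:
  assumes dominated: "\<And>x g. Esub (K x) g \<le> awp Cb g x" and "dPAST (While \<phi> Cb I)"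
  shows "bounded_runtime_kernel \<phi> K (ert (While \<phi> Cb I) (\<lambda>_. 0))"
proof
  let ?R = "ert (While \<phi> Cb I) (\<lambda>_. 0)"
  fix x
  show "?R x < \<infinity>"
    using \<open>dPAST (While \<phi> Cb I)\<close> by (simp add: dPAST_def)
  have "guarded_step \<phi> K ?R x \<le> (if \<phi> x then ert Cb ?R x else 0)"
    using dominated[of x ?R] awp_le_ert[of Cb ?R] by (auto simp: guarded_step_def le_fun_def intro: order_trans)
  then show "1 + guarded_step \<phi> K ?R x \<le> ?R x"
    by (subst ert_While) (simp add: add_left_mono)
qed

lemma suitable_os_finite: "suitable_os \<phi> Cb I f \<Longrightarrow> I \<sigma> < \<infinity>"
  unfolding suitable_os_def by (elim conjE) simp

lemma suitable_os_awp_finite: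
  assumes "suitable_os \<phi> Cb I f" and "\<phi> \<sigma>"
  shows "awp Cb I \<sigma> < \<infinity>"
proof -
  have "\<forall>\<sigma>. iv \<phi> \<sigma> * awp Cb I \<sigma> + iv (\<lambda>s. \<not> \<phi> s) \<sigma> * f \<sigma> < \<infinity>"
    using assms(1) unfolding suitable_os_def by (elim conjE)
  then have "iv \<phi> \<sigma> * awp Cb I \<sigma> + iv (\<lambda>s. \<not> \<phi> s) \<sigma> * f \<sigma> < \<infinity>" ..
  then show ?thesis
    using assms(2) by (simp add: iv_def)
qed

lemma suitable_os_bounded_differences:
  "suitable_os \<phi> Cb I f \<Longrightarrow> \<exists>b. \<forall>\<sigma>. iv \<phi> \<sigma> * awp Cb (\<lambda>\<tau>. adiff (I \<tau>) (I \<sigma>)) \<sigma> \<le> ennreal b"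
  unfolding suitable_os_def by (elim conjE exE) blast

lemma le_awp_While_plus_runtime:
  assumes wf: "wf_pgcl Cb"
    and sub: "\<And>\<sigma>. I \<sigma> \<le> iv \<phi> \<sigma> * awp Cb I \<sigma> + iv (\<lambda>s. \<not> \<phi> s) \<sigma> * f \<sigma>"
    and dPAST: "dPAST (While \<phi> Cb I)"
    and os: "suitable_os \<phi> Cb I f"
    and "0 < \<epsilon>"
  shows "I x \<le> awp (While \<phi> Cb I) f x + ennreal \<epsilon> * ert (While \<phi> Cb I) (\<lambda>_. 0) x"
proof -
  let ?L = "awp (While \<phi> Cb I) f"
  have awp_I_finite: "awp Cb I \<sigma> < \<infinity>" if "\<phi> \<sigma>" for \<sigma>
    using os that by (rule suitable_os_awp_finite)
  from suitable_os_bounded_differences[OF os] obtain b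
    where bounded: "\<forall>\<sigma>. iv \<phi> \<sigma> * awp Cb (\<lambda>\<tau>. adiff (I \<tau>) (I \<sigma>)) \<sigma> \<le> ennreal b" ..
  from exists_dominated_kernel_approx[OF wf awp_I_finite \<open>0 < \<epsilon>\<close>] obtain K
    where K: "\<forall>\<sigma>. K \<sigma> \<in> awp_dominated Cb \<sigma> \<and> (\<phi> \<sigma> \<longrightarrow> awp Cb I \<sigma> \<le> Esub (K \<sigma>) I + ennreal \<epsilon>)" ..
  then have K_le: "Esub (K \<sigma>) g \<le> awp Cb g \<sigma>" for \<sigma> g
    by (simp add: awp_dominated_def)
  have K_approx: "awp Cb I \<sigma> \<le> Esub (K \<sigma>) I + ennreal \<epsilon>" if "\<phi> \<sigma>" for \<sigma>
    using spec[OF K, of \<sigma>] that by blast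
  interpret bounded_runtime_kernel \<phi> K "ert (While \<phi> Cb I) (\<lambda>_. 0)"
    using K_le dPAST by (rule ert_bounded_runtime_kernel)
  show ?thesis
  proof (rule le_of_approx_subinvariant[where c = "\<lambda>\<sigma>. iv (\<lambda>s. \<not> \<phi> s) \<sigma> * f \<sigma>"])
    show "I \<sigma> < \<infinity>" for \<sigma>
      using os by (rule suitable_os_finite)
    show "Esub (K \<sigma>) (\<lambda>\<tau>. adiff (I \<tau>) (I \<sigma>)) \<le> ennreal b" if "\<phi> \<sigma>" for \<sigma>
    proof -
      have "awp Cb (\<lambda>\<tau>. adiff (I \<tau>) (I \<sigma>)) \<sigma> \<le> ennreal b"
        using spec[OF bounded, of \<sigma>] that by (simp add: iv_def)
      then show ?thesis
        by (rule order_trans[OF K_le])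
    qed
    show "I \<sigma> \<le> iv (\<lambda>s. \<not> \<phi> s) \<sigma> * f \<sigma> + ennreal \<epsilon> + step I \<sigma>" for \<sigma>
      using sub[of \<sigma>] K_approx[of \<sigma>] by (cases "\<phi> \<sigma>") (auto simp: iv_def guarded_step_def add.commute intro: order_trans)
    show "iv (\<lambda>s. \<not> \<phi> s) \<sigma> * f \<sigma> + step ?L \<sigma> \<le> ?L \<sigma>" for \<sigma>
      using K_le[of \<sigma> ?L] by (subst awp_While) (simp add: iv_def guarded_step_def)
  qed
qed

lemma awp_While_ge_optional_stopping:
  assumes "wf_pgcl Cb"
    and "\<And>\<sigma>. I \<sigma> \<le> iv \<phi> \<sigma> * awp Cb I \<sigma> + iv (\<lambda>s. \<not> \<phi> s) \<sigma> * f \<sigma>"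
    and dPAST: "dPAST (While \<phi> Cb I)"
    and "suitable_os \<phi> Cb I f"
  shows "I \<le> awp (While \<phi> Cb I) f"
proof (rule le_funI)
  fix x
  have "ert (While \<phi> Cb I) (\<lambda>_. 0) x < \<infinity>"
    using dPAST by (simp add: dPAST_def)
  with le_awp_While_plus_runtime[OF assms] show "I x \<le> awp (While \<phi> Cb I) f x"
    by (rule ennreal_le_of_le_plus_mult)
qed

lemma awp_star_le_awp_of_vc: "wf_pgcl C \<Longrightarrow> vc_awp dPASTSUBINV C f \<Longrightarrow> awp_star C f \<le> awp C f"
proof (induction C arbitrary: f)
  case (Seq C1 C2)
  then have "awp_star C1 (awp_star C2 f) \<le> awp C1 (awp_star C2 f)"
    by simp
  also have "\<dots> \<le> awp C1 (awp C2 f)"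
    using Seq by (intro awp_mono) simp
  finally show ?case
    by simp
next
  case (GChoice \<phi>1 C1 \<phi>2 C2)
  then show ?case
    unfolding le_fun_def awp.simps awp_star.simps by (intro allI max.mono mult_left_mono) auto
next
  case (PChoice C1 p C2)
  then show ?case
    unfolding le_fun_def awp.simps awp_star.simps pmix_def by (intro allI add_mono mult_left_mono) auto
next
  case (While \<phi> C I)
  then have body: "awp_star C I \<le> awp C I" and provider: "dPASTSUBINV (While \<phi> C I) f"
    by auto
  have sub: "I \<sigma> \<le> iv \<phi> \<sigma> * awp C I \<sigma> + iv (\<lambda>s. \<not> \<phi> s) \<sigma> * f \<sigma>" for \<sigma>
  proof -
    have "iv \<phi> \<sigma> * awp_star C I \<sigma> \<le> iv \<phi> \<sigma> * awp C I \<sigma>"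
      using body by (simp add: le_fun_def mult_left_mono)
    then show ?thesis
      using provider by (auto intro: order_trans add_right_mono)
  qed
  have "I \<le> awp (While \<phi> C I) f"
    by (rule awp_While_ge_optional_stopping[OF _ sub]) (use While.prems provider in auto)
  then show ?case
    by (simp only: awp_star.simps)
qed auto

theorem theorem6p12:
  fixes \<phi> :: pred and Cbody :: pgcl and I f :: expect
  assumes "wf_pgcl (While \<phi> Cbody I)"
    and "vc_awp dPASTSUBINV (While \<phi> Cbody I) f"
  shows "I \<le> awp (While \<phi> Cbody I) f"
  using awp_star_le_awp_of_vc[OF assms] by simp

end
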